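(* Let $\mathcal{C}$ be a deflation-exact category and let $\mathcal{A}$ be a full subcategory of $\mathcal{C}$ satisfying axioms (A1) and (A3). Then the composition of two $\mathcal{A}^{-1}$-inflations is again an $\mathcal{A}^{-1}$-inflation.
   Context: A conflation category is an additive category with a class of kernel-cokernel pairs (closed under isomorphisms) called conflations; first map an inflation, second a deflation. A deflation-exact category is a conflation category satisfying: (R0) $1_0$ is a deflation; (R1) composites of deflations are deflations; (R2) pullbacks of deflations along arbitrary morphisms exist and are deflations. (A1): for every conflation $A'\rightarrowtail A\twoheadrightarrow A''$ in $\mathcal{C}$, $A\in\mathcal{A}$ iff $A',A''\in\mathcal{A}$. (A3): if $a\colon C\rightarrowtail D$ is an inflation and $b\colon C\twoheadrightarrow A$ a deflation with $A\in\mathcal{A}$, then the pushout of $a$ along $b$ exists and yields a deflation $D\twoheadrightarrow P$ and an inflation $A\rightarrowtail P$. An $\mathcal{A}^{-1}$-inflation is an inflation whose cokernel lies in $\mathcal{A}$. *)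

theory Defs
  imports Main
begin

record ('o, 'm) addcat =
  Ob  :: "'o set"
  Ar  :: "'m set"
  dom :: "'m \<Rightarrow> 'o"
  cod :: "'m \<Rightarrow> 'o"
  cmp :: "'m \<Rightarrow> 'm \<Rightarrow> 'm"   (* cmp C g f = g o f *)
  idm :: "'o \<Rightarrow> 'm"
  zer :: "'o \<Rightarrow> 'o \<Rightarrow> 'm"
  add :: "'m \<Rightarrow> 'm \<Rightarrow> 'm"
  ngt :: "'m \<Rightarrow> 'm"

definition hom :: "('o, 'm) addcat \<Rightarrow> 'o \<Rightarrow> 'o \<Rightarrow> 'm set" where
  "hom C a b = {f \<in> Ar C. dom C f = a \<and> cod C f = b}"

definition is_category :: "('o, 'm) addcat \<Rightarrow> bool" where
  "is_category C \<longleftrightarrow>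
     (\<forall>f \<in> Ar C. dom C f \<in> Ob C \<and> cod C f \<in> Ob C) \<and>
     (\<forall>a \<in> Ob C. idm C a \<in> hom C a a) \<and>
     (\<forall>f \<in> Ar C. \<forall>g \<in> Ar C. cod C f = dom C g \<longrightarrow>
        cmp C g f \<in> hom C (dom C f) (cod C g)) \<and>
     (\<forall>f \<in> Ar C. cmp C (idm C (cod C f)) f = f \<and> cmp C f (idm C (dom C f)) = f) \<and>
     (\<forall>f \<in> Ar C. \<forall>g \<in> Ar C. \<forall>h \<in> Ar C. cod C f = dom C g \<longrightarrow> cod C g = dom C h \<longrightarrow>
        cmp C h (cmp C g f) = cmp C (cmp C h g) f)"

definition is_preadditive :: "('o, 'm) addcat \<Rightarrow> bool" where
  "is_preadditive C \<longleftrightarrow> is_category C \<and>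
     (\<forall>a \<in> Ob C. \<forall>b \<in> Ob C.
        zer C a b \<in> hom C a b \<and>
        (\<forall>f \<in> hom C a b. \<forall>g \<in> hom C a b. add C f g \<in> hom C a b) \<and>
        (\<forall>f \<in> hom C a b. ngt C f \<in> hom C a b) \<and>
        (\<forall>f \<in> hom C a b. \<forall>g \<in> hom C a b. \<forall>h \<in> hom C a b.
           add C (add C f g) h = add C f (add C g h)) \<and>
        (\<forall>f \<in> hom C a b. \<forall>g \<in> hom C a b. add C f g = add C g f) \<and>
        (\<forall>f \<in> hom C a b. add C f (zer C a b) = f) \<and>
        (\<forall>f \<in> hom C a b. add C f (ngt C f) = zer C a b)) \<and>
     (\<forall>a \<in> Ob C. \<forall>b \<in> Ob C. \<forall>c \<in> Ob C.
        (\<forall>f \<in> hom C a b. \<forall>g \<in> hom C b c. \<forall>g' \<in> hom C b c.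
           cmp C (add C g g') f = add C (cmp C g f) (cmp C g' f)) \<and>
        (\<forall>f \<in> hom C a b. \<forall>f' \<in> hom C a b. \<forall>g \<in> hom C b c.
           cmp C g (add C f f') = add C (cmp C g f) (cmp C g f')))"

definition is_zero_object :: "('o, 'm) addcat \<Rightarrow> 'o \<Rightarrow> bool" where
  "is_zero_object C z \<longleftrightarrow> z \<in> Ob C \<and>
     (\<forall>a \<in> Ob C. (\<exists>!f. f \<in> hom C z a) \<and> (\<exists>!f. f \<in> hom C a z))"

definition is_biproduct :: "('o, 'm) addcat \<Rightarrow> 'o \<Rightarrow> 'o \<Rightarrow> 'o \<Rightarrow> 'm \<Rightarrow> 'm \<Rightarrow> 'm \<Rightarrow> 'm \<Rightarrow> bool" where
  "is_biproduct C a b p i1 i2 p1 p2 \<longleftrightarrow> p \<in> Ob C \<and>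
     i1 \<in> hom C a p \<and> i2 \<in> hom C b p \<and> p1 \<in> hom C p a \<and> p2 \<in> hom C p b \<and>
     cmp C p1 i1 = idm C a \<and> cmp C p2 i2 = idm C b \<and>
     cmp C p2 i1 = zer C a b \<and> cmp C p1 i2 = zer C b a \<and>
     add C (cmp C i1 p1) (cmp C i2 p2) = idm C p"

definition is_additive :: "('o, 'm) addcat \<Rightarrow> bool" where
  "is_additive C \<longleftrightarrow> is_preadditive C \<and> (\<exists>z. is_zero_object C z) \<and>
     (\<forall>a \<in> Ob C. \<forall>b \<in> Ob C. \<exists>p i1 i2 p1 p2. is_biproduct C a b p i1 i2 p1 p2)"

definition is_kernel :: "('o, 'm) addcat \<Rightarrow> 'm \<Rightarrow> 'm \<Rightarrow> bool" where
  "is_kernel C k f \<longleftrightarrow> k \<in> Ar C \<and> f \<in> Ar C \<and> cod C k = dom C f \<and>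
     cmp C f k = zer C (dom C k) (cod C f) \<and>
     (\<forall>x \<in> Ob C. \<forall>g \<in> hom C x (dom C f). cmp C f g = zer C x (cod C f) \<longrightarrow>
        (\<exists>!h. h \<in> hom C x (dom C k) \<and> cmp C k h = g))"

definition is_cokernel :: "('o, 'm) addcat \<Rightarrow> 'm \<Rightarrow> 'm \<Rightarrow> bool" where
  "is_cokernel C c f \<longleftrightarrow> c \<in> Ar C \<and> f \<in> Ar C \<and> dom C c = cod C f \<and>
     cmp C c f = zer C (dom C f) (cod C c) \<and>
     (\<forall>x \<in> Ob C. \<forall>g \<in> hom C (cod C f) x. cmp C g f = zer C (dom C f) x \<longrightarrow>
        (\<exists>!h. h \<in> hom C (cod C c) x \<and> cmp C h c = g))"

definition is_kernel_cokernel_pair :: "('o, 'm) addcat \<Rightarrow> 'm \<Rightarrow> 'm \<Rightarrow> bool" where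
  "is_kernel_cokernel_pair C i p \<longleftrightarrow> is_kernel C i p \<and> is_cokernel C p i"

definition is_iso :: "('o, 'm) addcat \<Rightarrow> 'm \<Rightarrow> bool" where
  "is_iso C f \<longleftrightarrow> f \<in> Ar C \<and> (\<exists>g \<in> hom C (cod C f) (dom C f).
     cmp C g f = idm C (dom C f) \<and> cmp C f g = idm C (cod C f))"

text \<open>Square  f' : P -> B,  p' : P -> C',  with  p o f' = f o p'  (p : B -> X, f : C' -> X)
  is a pullback of p along f.\<close>
definition is_pullback :: "('o, 'm) addcat \<Rightarrow> 'm \<Rightarrow> 'm \<Rightarrow> 'm \<Rightarrow> 'm \<Rightarrow> bool" where
  "is_pullback C p f f' p' \<longleftrightarrow> p \<in> Ar C \<and> f \<in> Ar C \<and> f' \<in> Ar C \<and> p' \<in> Ar C \<and>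
     cod C p = cod C f \<and> dom C f' = dom C p' \<and> cod C f' = dom C p \<and> cod C p' = dom C f \<and>
     cmp C p f' = cmp C f p' \<and>
     (\<forall>x \<in> Ob C. \<forall>u \<in> hom C x (dom C p). \<forall>v \<in> hom C x (dom C f).
        cmp C p u = cmp C f v \<longrightarrow>
        (\<exists>!h. h \<in> hom C x (dom C f') \<and> cmp C f' h = u \<and> cmp C p' h = v))"

text \<open>Square  b' : D -> P,  a' : A -> P,  with  b' o a = a' o b  (a : X -> D, b : X -> A)
  is a pushout of a along b.\<close>
definition is_pushout :: "('o, 'm) addcat \<Rightarrow> 'm \<Rightarrow> 'm \<Rightarrow> 'm \<Rightarrow> 'm \<Rightarrow> bool" where
  "is_pushout C a b b' a' \<longleftrightarrow> a \<in> Ar C \<and> b \<in> Ar C \<and> b' \<in> Ar C \<and> a' \<in> Ar C \<and>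
     dom C a = dom C b \<and> cod C b' = cod C a' \<and> dom C b' = cod C a \<and> dom C a' = cod C b \<and>
     cmp C b' a = cmp C a' b \<and>
     (\<forall>x \<in> Ob C. \<forall>u \<in> hom C (cod C a) x. \<forall>v \<in> hom C (cod C b) x.
        cmp C u a = cmp C v b \<longrightarrow>
        (\<exists>!h. h \<in> hom C (cod C b') x \<and> cmp C h b' = u \<and> cmp C h a' = v))"

text \<open>Conf is the class of conflations, given as pairs (inflation, deflation).\<close>
definition conflation_category :: "('o, 'm) addcat \<Rightarrow> ('m \<times> 'm) set \<Rightarrow> bool" where
  "conflation_category C Conf \<longleftrightarrow> is_additive C \<and>
     (\<forall>(i, p) \<in> Conf. is_kernel_cokernel_pair C i p) \<and>
     (\<forall>(i, p) \<in> Conf. \<forall>i' p' u' u u''.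
        is_kernel_cokernel_pair C i' p' \<and>
        is_iso C u' \<and> is_iso C u \<and> is_iso C u'' \<and>
        dom C u' = dom C i \<and> cod C u' = dom C i' \<and>
        dom C u = cod C i \<and> cod C u = cod C i' \<and>
        dom C u'' = cod C p \<and> cod C u'' = cod C p' \<and>
        cmp C u i = cmp C i' u' \<and> cmp C u'' p = cmp C p' u
        \<longrightarrow> (i', p') \<in> Conf)"

definition inflation :: "('m \<times> 'm) set \<Rightarrow> 'm \<Rightarrow> bool" where
  "inflation Conf i \<longleftrightarrow> (\<exists>p. (i, p) \<in> Conf)"

definition deflation :: "('m \<times> 'm) set \<Rightarrow> 'm \<Rightarrow> bool" where
  "deflation Conf p \<longleftrightarrow> (\<exists>i. (i, p) \<in> Conf)"

definition deflation_exact :: "('o, 'm) addcat \<Rightarrow> ('m \<times> 'm) set \<Rightarrow> bool" where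
  "deflation_exact C Conf \<longleftrightarrow> conflation_category C Conf \<and>
     \<comment> \<open>(R0)\<close>
     (\<forall>z. is_zero_object C z \<longrightarrow> deflation Conf (idm C z)) \<and>
     \<comment> \<open>(R1)\<close>
     (\<forall>p q. deflation Conf p \<and> deflation Conf q \<and> cod C p = dom C q
        \<longrightarrow> deflation Conf (cmp C q p)) \<and>
     \<comment> \<open>(R2)\<close>
     (\<forall>p f. deflation Conf p \<and> f \<in> Ar C \<and> cod C f = cod C p \<longrightarrow>
        (\<exists>f' p'. is_pullback C p f f' p' \<and> deflation Conf p'))"

section \<open>Axioms on a full subcategory, given by its class of objects A\<close>

definition axiom_A1 :: "('o, 'm) addcat \<Rightarrow> ('m \<times> 'm) set \<Rightarrow> 'o set \<Rightarrow> bool" where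
  "axiom_A1 C Conf A \<longleftrightarrow>
     (\<forall>(i, p) \<in> Conf. cod C i \<in> A \<longleftrightarrow> (dom C i \<in> A \<and> cod C p \<in> A))"

definition axiom_A3 :: "('o, 'm) addcat \<Rightarrow> ('m \<times> 'm) set \<Rightarrow> 'o set \<Rightarrow> bool" where
  "axiom_A3 C Conf A \<longleftrightarrow>
     (\<forall>a b. inflation Conf a \<and> deflation Conf b \<and> dom C a = dom C b \<and> cod C b \<in> A \<longrightarrow>
        (\<exists>b' a'. is_pushout C a b b' a' \<and> deflation Conf b' \<and> inflation Conf a'))"

definition A_inv_inflation :: "('o, 'm) addcat \<Rightarrow> ('m \<times> 'm) set \<Rightarrow> 'o set \<Rightarrow> 'm \<Rightarrow> bool" where
  "A_inv_inflation C Conf A i \<longleftrightarrow> (\<exists>p. (i, p) \<in> Conf \<and> cod C p \<in> A)"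

end

theory Submission
  imports Defs
begin

text \<open>Let \<open>f\<close> and \<open>g\<close> have cokernels \<open>p\<close> and \<open>q\<close> with targets in \<open>A\<close>. By (A3) the
  inflation \<open>g\<close> can be pushed out along the deflation \<open>p\<close>, giving a deflation \<open>b'\<close> and an
  inflation \<open>a'\<close>. The cokernel \<open>q\<close> of \<open>g\<close> factors through \<open>b'\<close> as a cokernel of \<open>a'\<close>, so the
  common target \<open>P\<close> of \<open>a'\<close> and \<open>b'\<close> is an extension of objects of \<open>A\<close> and lies in \<open>A\<close>
  by (A1). A diagram chase shows that \<open>g \<circ> f\<close> is a kernel of \<open>b'\<close> and \<open>b'\<close> a cokernel of
  \<open>g \<circ> f\<close>; since \<open>b'\<close> is a deflation, \<open>g \<circ> f\<close> is an inflation with cokernel \<open>b'\<close>.\<close>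

locale preadditive_category =
  fixes C :: "('o, 'm) addcat"
  assumes preadditive: "is_preadditive C"
begin

lemma category: "is_category C"
  using preadditive by (simp add: is_preadditive_def)

lemma dom_in_Ob [simp]: "f \<in> Ar C \<Longrightarrow> dom C f \<in> Ob C"
  using category by (simp add: is_category_def)

lemma cod_in_Ob [simp]: "f \<in> Ar C \<Longrightarrow> cod C f \<in> Ob C"
  using category by (simp add: is_category_def)

lemma idm_in_Ar [simp]: "a \<in> Ob C \<Longrightarrow> idm C a \<in> Ar C"
  and dom_idm [simp]: "a \<in> Ob C \<Longrightarrow> dom C (idm C a) = a"
  and cod_idm [simp]: "a \<in> Ob C \<Longrightarrow> cod C (idm C a) = a"
  using category by (simp_all add: is_category_def hom_def)

lemma cmp_in_Ar [simp]: "f \<in> Ar C \<Longrightarrow> g \<in> Ar C \<Longrightarrow> cod C f = dom C g \<Longrightarrow> cmp C g f \<in> Ar C"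
  and dom_cmp [simp]: "f \<in> Ar C \<Longrightarrow> g \<in> Ar C \<Longrightarrow> cod C f = dom C g \<Longrightarrow> dom C (cmp C g f) = dom C f"
  and cod_cmp [simp]: "f \<in> Ar C \<Longrightarrow> g \<in> Ar C \<Longrightarrow> cod C f = dom C g \<Longrightarrow> cod C (cmp C g f) = cod C g"
  using category unfolding is_category_def hom_def by blast+

lemma cmp_idm_left: "f \<in> Ar C \<Longrightarrow> cmp C (idm C (cod C f)) f = f"
  and cmp_idm_right: "f \<in> Ar C \<Longrightarrow> cmp C f (idm C (dom C f)) = f"
  using category unfolding is_category_def by blast+

lemma cmp_assoc:
  "f \<in> Ar C \<Longrightarrow> g \<in> Ar C \<Longrightarrow> h \<in> Ar C \<Longrightarrow> cod C f = dom C g \<Longrightarrow> cod C g = dom C h \<Longrightarrow>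
   cmp C (cmp C h g) f = cmp C h (cmp C g f)"
  using category unfolding is_category_def by metis

lemma zer_in_Ar [simp]: "a \<in> Ob C \<Longrightarrow> b \<in> Ob C \<Longrightarrow> zer C a b \<in> Ar C"
  and dom_zer [simp]: "a \<in> Ob C \<Longrightarrow> b \<in> Ob C \<Longrightarrow> dom C (zer C a b) = a"
  and cod_zer [simp]: "a \<in> Ob C \<Longrightarrow> b \<in> Ob C \<Longrightarrow> cod C (zer C a b) = b"
  using preadditive unfolding is_preadditive_def hom_def by blast+

lemma add_self_eq_zer:
  assumes x: "x \<in> hom C a b" and a: "a \<in> Ob C" and b: "b \<in> Ob C" and idem: "add C x x = x"
  shows "x = zer C a b"
proof -
  have z: "zer C a b = add C x (ngt C x)"
    and add_assoc: "add C (add C x x) (ngt C x) = add C x (add C x (ngt C x))"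
    and add_zer: "add C x (zer C a b) = x"
    using preadditive a b x unfolding is_preadditive_def by (metis (no_types, lifting))+
  have "zer C a b = add C (add C x x) (ngt C x)" using z idem by simp
  also have "\<dots> = x" using add_assoc z add_zer by simp
  finally show ?thesis by simp
qed

lemma cmp_zer_left:
  assumes f: "f \<in> Ar C" and c: "c \<in> Ob C"
  shows "cmp C (zer C (cod C f) c) f = zer C (dom C f) c"
proof -
  let ?z = "zer C (cod C f) c"
  have zh: "?z \<in> hom C (cod C f) c" and fh: "f \<in> hom C (dom C f) (cod C f)"
    using f c by (simp_all add: hom_def)
  have "add C ?z ?z = ?z"
    using preadditive zh f c unfolding is_preadditive_def by (meson cod_in_Ob)
  moreover have "cmp C (add C ?z ?z) f = add C (cmp C ?z f) (cmp C ?z f)"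
    using preadditive zh fh f c unfolding is_preadditive_def by (meson cod_in_Ob dom_in_Ob)
  ultimately have "add C (cmp C ?z f) (cmp C ?z f) = cmp C ?z f" by simp
  moreover have "cmp C ?z f \<in> hom C (dom C f) c" using f c by (simp add: hom_def)
  ultimately show ?thesis using add_self_eq_zer f c by simp
qed

lemma cmp_zer_right:
  assumes g: "g \<in> Ar C" and a: "a \<in> Ob C"
  shows "cmp C g (zer C a (dom C g)) = zer C a (cod C g)"
proof -
  let ?z = "zer C a (dom C g)"
  have zh: "?z \<in> hom C a (dom C g)" and gh: "g \<in> hom C (dom C g) (cod C g)"
    using g a by (simp_all add: hom_def)
  have "add C ?z ?z = ?z"
    using preadditive zh g a unfolding is_preadditive_def by (meson dom_in_Ob)
  moreover have "cmp C g (add C ?z ?z) = add C (cmp C g ?z) (cmp C g ?z)"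
    using preadditive zh gh g a unfolding is_preadditive_def by (meson cod_in_Ob dom_in_Ob)
  ultimately have "add C (cmp C g ?z) (cmp C g ?z) = cmp C g ?z" by simp
  moreover have "cmp C g ?z \<in> hom C a (cod C g)" using g a by (simp add: hom_def)
  ultimately show ?thesis using add_self_eq_zer g a by simp
qed

lemma is_iso_idm: "a \<in> Ob C \<Longrightarrow> is_iso C (idm C a)"
  unfolding is_iso_def hom_def using cmp_idm_left[of "idm C a"] by force

lemma kernelD:
  "is_kernel C k f \<Longrightarrow> k \<in> Ar C \<and> f \<in> Ar C \<and> cod C k = dom C f \<and> cmp C f k = zer C (dom C k) (cod C f)"
  by (simp add: is_kernel_def)

lemma cokernelD:
  "is_cokernel C c f \<Longrightarrow> c \<in> Ar C \<and> f \<in> Ar C \<and> dom C c = cod C f \<and> cmp C c f = zer C (dom C f) (cod C c)"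
  by (simp add: is_cokernel_def)

lemma pushoutD:
  "is_pushout C a b b' a' \<Longrightarrow> a \<in> Ar C \<and> b \<in> Ar C \<and> b' \<in> Ar C \<and> a' \<in> Ar C \<and>
     dom C a = dom C b \<and> cod C b' = cod C a' \<and> dom C b' = cod C a \<and> dom C a' = cod C b \<and>
     cmp C b' a = cmp C a' b"
  by (simp add: is_pushout_def)

lemma kernel_universal:
  "is_kernel C k f \<Longrightarrow> x \<in> Ob C \<Longrightarrow> g \<in> hom C x (dom C f) \<Longrightarrow>
   cmp C f g = zer C x (cod C f) \<Longrightarrow> \<exists>!h. h \<in> hom C x (dom C k) \<and> cmp C k h = g"
  unfolding is_kernel_def by blast

lemma cokernel_universal:
  "is_cokernel C c f \<Longrightarrow> x \<in> Ob C \<Longrightarrow> g \<in> hom C (cod C f) x \<Longrightarrow>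
   cmp C g f = zer C (dom C f) x \<Longrightarrow> \<exists>!h. h \<in> hom C (cod C c) x \<and> cmp C h c = g"
  unfolding is_cokernel_def by blast

lemma pushout_universal:
  "is_pushout C a b b' a' \<Longrightarrow> x \<in> Ob C \<Longrightarrow> u \<in> hom C (cod C a) x \<Longrightarrow>
   v \<in> hom C (cod C b) x \<Longrightarrow> cmp C u a = cmp C v b \<Longrightarrow>
   \<exists>!h. h \<in> hom C (cod C b') x \<and> cmp C h b' = u \<and> cmp C h a' = v"
  unfolding is_pushout_def by blast

lemma kernel_factor:
  assumes k: "is_kernel C k f" and t: "t \<in> Ar C" "cod C t = dom C f"
    and "cmp C f t = zer C (dom C t) (cod C f)"
  shows "\<exists>s. s \<in> Ar C \<and> dom C s = dom C t \<and> cod C s = dom C k \<and> cmp C k s = t"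
proof -
  have "\<exists>!h. h \<in> hom C (dom C t) (dom C k) \<and> cmp C k h = t"
    using kernel_universal[OF k, of "dom C t" t] t assms(4) by (simp add: hom_def)
  then show ?thesis by (auto simp: hom_def)
qed

lemma cokernel_factor:
  assumes c: "is_cokernel C c f" and t: "t \<in> Ar C" "dom C t = cod C f"
    and "cmp C t f = zer C (dom C f) (cod C t)"
  shows "\<exists>s. s \<in> Ar C \<and> dom C s = cod C c \<and> cod C s = cod C t \<and> cmp C s c = t"
proof -
  have "\<exists>!h. h \<in> hom C (cod C c) (cod C t) \<and> cmp C h c = t"
    using cokernel_universal[OF c, of "cod C t" t] t assms(4) by (simp add: hom_def)
  then show ?thesis by (auto simp: hom_def)
qed

lemma pushout_factor:
  assumes po: "is_pushout C a b b' a'" and "u \<in> Ar C" "v \<in> Ar C"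
    and "dom C u = cod C a" "dom C v = cod C b" "cod C u = cod C v" "cmp C u a = cmp C v b"
  shows "\<exists>h. h \<in> Ar C \<and> dom C h = cod C b' \<and> cod C h = cod C u \<and> cmp C h b' = u \<and> cmp C h a' = v"
proof -
  have "\<exists>!h. h \<in> hom C (cod C b') (cod C u) \<and> cmp C h b' = u \<and> cmp C h a' = v"
    using pushout_universal[OF po, of "cod C u" u v] assms(2-) by (simp add: hom_def)
  then show ?thesis by (auto simp: hom_def)
qed

lemma kernel_cancel:
  assumes k: "is_kernel C k f" and x: "x \<in> Ar C" and y: "y \<in> Ar C"
    and xy: "cod C x = dom C k" "cod C y = dom C k" "dom C x = dom C y"
    and eq: "cmp C k x = cmp C k y"
  shows "x = y"
proof -
  note K = kernelD[OF k]
  let ?t = "cmp C k x"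
  have "cmp C f ?t = cmp C (cmp C f k) x"
    using cmp_assoc[of x k f] K x xy by simp
  also have "\<dots> = zer C (dom C x) (cod C f)"
    using cmp_zer_left[of x "cod C f"] K x xy by simp
  finally have "cmp C f ?t = zer C (dom C x) (cod C f)" .
  then have "\<exists>!h. h \<in> hom C (dom C x) (dom C k) \<and> cmp C k h = ?t"
    using kernel_universal[OF k, of "dom C x" ?t] K x y xy by (simp add: hom_def)
  moreover have "x \<in> hom C (dom C x) (dom C k)" "y \<in> hom C (dom C x) (dom C k)"
    using x y xy by (auto simp: hom_def)
  ultimately show ?thesis using eq by (metis (no_types, lifting))
qed

lemma cokernel_cancel:
  assumes c: "is_cokernel C c f" and x: "x \<in> Ar C" and y: "y \<in> Ar C"
    and xy: "dom C x = cod C c" "dom C y = cod C c" "cod C x = cod C y"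
    and eq: "cmp C x c = cmp C y c"
  shows "x = y"
proof -
  note K = cokernelD[OF c]
  let ?t = "cmp C x c"
  have "cmp C ?t f = cmp C x (cmp C c f)"
    using cmp_assoc[of f c x] K x xy by simp
  also have "\<dots> = zer C (dom C f) (cod C x)"
    using cmp_zer_right[of x "dom C f"] K x xy by simp
  finally have "cmp C ?t f = zer C (dom C f) (cod C x)" .
  then have "\<exists>!h. h \<in> hom C (cod C c) (cod C x) \<and> cmp C h c = ?t"
    using cokernel_universal[OF c, of "cod C x" ?t] K x y xy by (simp add: hom_def)
  moreover have "x \<in> hom C (cod C c) (cod C x)" "y \<in> hom C (cod C c) (cod C x)"
    using x y xy by (auto simp: hom_def)
  ultimately show ?thesis using eq by (metis (no_types, lifting))
qed

lemma pushout_cancel: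
  assumes po: "is_pushout C a b b' a'" and h: "h1 \<in> Ar C" "h2 \<in> Ar C"
    and hh: "dom C h1 = cod C b'" "dom C h2 = cod C b'" "cod C h1 = cod C h2"
    and eq: "cmp C h1 b' = cmp C h2 b'" "cmp C h1 a' = cmp C h2 a'"
  shows "h1 = h2"
proof -
  note P = pushoutD[OF po]
  let ?u = "cmp C h1 b'" and ?v = "cmp C h1 a'"
  have "cmp C ?u a = cmp C ?v b"
    using P h hh cmp_assoc[of a b' h1] cmp_assoc[of b a' h1] by simp
  moreover have "?u \<in> hom C (cod C a) (cod C h1)" "?v \<in> hom C (cod C b) (cod C h1)"
    using P h hh by (auto simp: hom_def)
  ultimately have "\<exists>!h. h \<in> hom C (cod C b') (cod C h1) \<and> cmp C h b' = ?u \<and> cmp C h a' = ?v"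
    using pushout_universal[OF po, of "cod C h1" ?u ?v] h by simp
  moreover have "h1 \<in> hom C (cod C b') (cod C h1)" "h2 \<in> hom C (cod C b') (cod C h1)"
    using h hh by (auto simp: hom_def)
  ultimately show ?thesis using eq by (metis (no_types, lifting))
qed

lemma kernelI:
  assumes "k \<in> Ar C" "f \<in> Ar C" "cod C k = dom C f" "cmp C f k = zer C (dom C k) (cod C f)"
    and factor: "\<And>t. t \<in> Ar C \<Longrightarrow> cod C t = dom C f \<Longrightarrow> cmp C f t = zer C (dom C t) (cod C f) \<Longrightarrow>
       \<exists>s. s \<in> Ar C \<and> dom C s = dom C t \<and> cod C s = dom C k \<and> cmp C k s = t"
    and cancel: "\<And>x y. x \<in> Ar C \<Longrightarrow> y \<in> Ar C \<Longrightarrow> cod C x = dom C k \<Longrightarrow> cod C y = dom C k \<Longrightarrow>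
       dom C x = dom C y \<Longrightarrow> cmp C k x = cmp C k y \<Longrightarrow> x = y"
  shows "is_kernel C k f"
  unfolding is_kernel_def
proof (intro conjI ballI impI)
  fix x g assume "x \<in> Ob C" "g \<in> hom C x (dom C f)" "cmp C f g = zer C x (cod C f)"
  then obtain s where s: "s \<in> Ar C" "dom C s = x" "cod C s = dom C k" "cmp C k s = g"
    using factor[of g] by (auto simp: hom_def)
  show "\<exists>!h. h \<in> hom C x (dom C k) \<and> cmp C k h = g"
  proof (rule ex1I[of _ s])
    fix h assume "h \<in> hom C x (dom C k) \<and> cmp C k h = g"
    then show "h = s" using cancel[of h s] s by (auto simp: hom_def)
  qed (use s in \<open>simp add: hom_def\<close>)
qed (use assms in auto)

lemma cokernelI:
  assumes "c \<in> Ar C" "f \<in> Ar C" "dom C c = cod C f" "cmp C c f = zer C (dom C f) (cod C c)"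
    and factor: "\<And>t. t \<in> Ar C \<Longrightarrow> dom C t = cod C f \<Longrightarrow> cmp C t f = zer C (dom C f) (cod C t) \<Longrightarrow>
       \<exists>s. s \<in> Ar C \<and> dom C s = cod C c \<and> cod C s = cod C t \<and> cmp C s c = t"
    and cancel: "\<And>x y. x \<in> Ar C \<Longrightarrow> y \<in> Ar C \<Longrightarrow> dom C x = cod C c \<Longrightarrow> dom C y = cod C c \<Longrightarrow>
       cod C x = cod C y \<Longrightarrow> cmp C x c = cmp C y c \<Longrightarrow> x = y"
  shows "is_cokernel C c f"
  unfolding is_cokernel_def
proof (intro conjI ballI impI)
  fix x g assume "x \<in> Ob C" "g \<in> hom C (cod C f) x" "cmp C g f = zer C (dom C f) x"
  then obtain s where s: "s \<in> Ar C" "dom C s = cod C c" "cod C s = x" "cmp C s c = g"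
    using factor[of g] by (auto simp: hom_def)
  show "\<exists>!h. h \<in> hom C (cod C c) x \<and> cmp C h c = g"
  proof (rule ex1I[of _ s])
    fix h assume "h \<in> hom C (cod C c) x \<and> cmp C h c = g"
    then show "h = s" using cancel[of h s] s by (auto simp: hom_def)
  qed (use s in \<open>simp add: hom_def\<close>)
qed (use assms in auto)


lemma cokernel_unique_up_to_iso:
  assumes r: "is_cokernel C r a" and h: "is_cokernel C h a"
  shows "\<exists>\<phi>. is_iso C \<phi> \<and> dom C \<phi> = cod C r \<and> cod C \<phi> = cod C h \<and> cmp C \<phi> r = h"
proof -
  note R = cokernelD[OF r] and H = cokernelD[OF h]
  obtain \<phi> where \<phi>: "\<phi> \<in> Ar C" "dom C \<phi> = cod C r" "cod C \<phi> = cod C h" "cmp C \<phi> r = h"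
    using cokernel_factor[OF r, of h] H by auto
  obtain \<psi> where \<psi>: "\<psi> \<in> Ar C" "dom C \<psi> = cod C h" "cod C \<psi> = cod C r" "cmp C \<psi> h = r"
    using cokernel_factor[OF h, of r] R by auto
  have "cmp C (cmp C \<psi> \<phi>) r = cmp C (idm C (cod C r)) r"
    using cmp_assoc[of r \<phi> \<psi>] cmp_idm_left \<phi> \<psi> R by simp
  then have "cmp C \<psi> \<phi> = idm C (cod C r)"
    by (rule cokernel_cancel[OF r, rotated -1]) (use \<phi> \<psi> R in auto)
  moreover have "cmp C (cmp C \<phi> \<psi>) h = cmp C (idm C (cod C h)) h"
    using cmp_assoc[of h \<psi> \<phi>] cmp_idm_left \<phi> \<psi> H by simp
  then have "cmp C \<phi> \<psi> = idm C (cod C h)"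
    by (rule cokernel_cancel[OF h, rotated -1]) (use \<phi> \<psi> H in auto)
  ultimately have "is_iso C \<phi>"
    unfolding is_iso_def hom_def using \<phi> \<psi> by auto
  then show ?thesis using \<phi> by blast
qed

lemma kernel_unique_up_to_iso:
  assumes k: "is_kernel C k f" and k': "is_kernel C k' f"
  shows "\<exists>u. is_iso C u \<and> dom C u = dom C k \<and> cod C u = dom C k' \<and> cmp C k' u = k"
proof -
  note K = kernelD[OF k] and K' = kernelD[OF k']
  obtain u where u: "u \<in> Ar C" "dom C u = dom C k" "cod C u = dom C k'" "cmp C k' u = k"
    using kernel_factor[OF k', of k] K by auto
  obtain v where v: "v \<in> Ar C" "dom C v = dom C k'" "cod C v = dom C k" "cmp C k v = k'"
    using kernel_factor[OF k, of k'] K' by auto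
  have "cmp C k (cmp C v u) = cmp C k (idm C (dom C k))"
    using cmp_assoc[of u v k] cmp_idm_right u v K by simp
  then have "cmp C v u = idm C (dom C k)"
    by (rule kernel_cancel[OF k, rotated -1]) (use u v K in auto)
  moreover have "cmp C k' (cmp C u v) = cmp C k' (idm C (dom C k'))"
    using cmp_assoc[of v u k'] cmp_idm_right u v K' by simp
  then have "cmp C u v = idm C (dom C k')"
    by (rule kernel_cancel[OF k', rotated -1]) (use u v K' in auto)
  ultimately have "is_iso C u"
    unfolding is_iso_def hom_def using u v by auto
  then show ?thesis using u by blast
qed

lemma kernel_cmp_iso:
  assumes k: "is_kernel C a r" and iso: "is_iso C \<phi>" "dom C \<phi> = cod C r"
  shows "is_kernel C a (cmp C \<phi> r)"
proof -
  obtain \<psi> where \<psi>: "\<psi> \<in> Ar C" "dom C \<psi> = cod C \<phi>" "cod C \<psi> = cod C r"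
      "cmp C \<psi> \<phi> = idm C (cod C r)"
    using iso unfolding is_iso_def hom_def by auto
  have \<phi>: "\<phi> \<in> Ar C" using iso by (simp add: is_iso_def)
  note K = kernelD[OF k]
  show ?thesis
  proof (rule kernelI)
    show "cmp C (cmp C \<phi> r) a = zer C (dom C a) (cod C (cmp C \<phi> r))"
      using cmp_assoc[of a r \<phi>] cmp_zer_right[of \<phi> "dom C a"] K \<phi> iso by simp
  next
    fix t assume t: "t \<in> Ar C" "cod C t = dom C (cmp C \<phi> r)"
      "cmp C (cmp C \<phi> r) t = zer C (dom C t) (cod C (cmp C \<phi> r))"
    have rt: "cod C t = dom C r" "cmp C r t \<in> Ar C" "cod C (cmp C r t) = cod C r"
      using t K \<phi> iso by auto
    have "cmp C r t = cmp C (cmp C \<psi> \<phi>) (cmp C r t)"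
      using cmp_idm_left[OF rt(2)] rt \<psi>(4) by simp
    also have "\<dots> = cmp C \<psi> (cmp C (cmp C \<phi> r) t)"
      using cmp_assoc[OF rt(2) \<phi> \<psi>(1)] cmp_assoc[OF t(1) _ \<phi> rt(1)] K \<psi> iso rt by simp
    also have "\<dots> = zer C (dom C t) (cod C r)"
      using t(3) cmp_zer_right[OF \<psi>(1), of "dom C t"] \<psi> K \<phi> iso t(1) rt(1) by simp
    finally show "\<exists>s. s \<in> Ar C \<and> dom C s = dom C t \<and> cod C s = dom C a \<and> cmp C a s = t"
      using kernel_factor[OF k t(1) rt(1)] by simp
  qed (use K \<phi> iso kernel_cancel[OF k] in auto)
qed


lemma cokernel_pushout:
  assumes po: "is_pushout C g p b' a'" and cq: "is_cokernel C q g"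
  shows "\<exists>h. is_cokernel C h a' \<and> cod C h = cod C q \<and> cmp C h b' = q"
proof -
  note P = pushoutD[OF po] and Q = cokernelD[OF cq]
  have "cmp C q g = cmp C (zer C (cod C p) (cod C q)) p"
    using P Q cmp_zer_left[of p "cod C q"] by simp
  then obtain h where h: "h \<in> Ar C" "dom C h = cod C b'" "cod C h = cod C q" "cmp C h b' = q"
      and ha': "cmp C h a' = zer C (cod C p) (cod C q)"
    using pushout_factor[OF po, of q "zer C (cod C p) (cod C q)"] P Q by auto
  have "is_cokernel C h a'"
  proof (rule cokernelI)
    fix t assume t: "t \<in> Ar C" "dom C t = cod C a'" "cmp C t a' = zer C (dom C a') (cod C t)"
    let ?tb = "cmp C t b'"
    have tb: "?tb \<in> Ar C" "dom C ?tb = cod C g" "cod C ?tb = cod C t"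
      using t P by auto
    \<comment> \<open>\<open>t \<circ> b'\<close> kills \<open>g\<close>, so it factors through \<open>q = h \<circ> b'\<close>;
      the factor agrees with \<open>t\<close> on both legs of the pushout\<close>
    have "cmp C ?tb g = cmp C (cmp C t a') p"
      using cmp_assoc[of g b' t] cmp_assoc[of p a' t] t P by simp
    also have "\<dots> = zer C (dom C g) (cod C ?tb)"
      using t P tb cmp_zer_left[of p "cod C t"] by simp
    finally obtain s where s: "s \<in> Ar C" "dom C s = cod C q" "cod C s = cod C t" "cmp C s q = ?tb"
      using cokernel_factor[OF cq tb(1,2)] tb(3) by auto
    have sh: "cmp C s h \<in> Ar C" "dom C (cmp C s h) = cod C b'" "cod C (cmp C s h) = cod C t"
      using s h by auto
    have "cmp C (cmp C s h) b' = cmp C t b'"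
      using cmp_assoc[of b' h s] P h s by simp
    moreover have "cmp C (cmp C s h) a' = cmp C t a'"
      using cmp_assoc[of a' h s] cmp_zer_right[of s "cod C p"] P h s t ha' by simp
    ultimately have "cmp C s h = t"
      using pushout_cancel[OF po sh(1) t(1) sh(2)] sh t P by simp
    then show "\<exists>s. s \<in> Ar C \<and> dom C s = cod C h \<and> cod C s = cod C t \<and> cmp C s h = t"
      using s h by auto
  next
    fix x y assume xy: "x \<in> Ar C" "y \<in> Ar C" "dom C x = cod C h" "dom C y = cod C h"
      "cod C x = cod C y" "cmp C x h = cmp C y h"
    have "cmp C x q = cmp C y q"
      using cmp_assoc[of b' h x] cmp_assoc[of b' h y] P h xy by simp
    then show "x = y"
      using cokernel_cancel[OF cq xy(1,2)] xy h by simp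
  qed (use h ha' P in auto)
  then show ?thesis using h by blast
qed

lemma pushout_cmp_eq_zer:
  assumes po: "is_pushout C g p b' a'" and f: "f \<in> Ar C" "cod C f = dom C g"
    and pf: "cmp C p f = zer C (dom C f) (cod C p)"
  shows "cmp C b' (cmp C g f) = zer C (dom C f) (cod C b')"
proof -
  note P = pushoutD[OF po]
  have "cmp C b' (cmp C g f) = cmp C a' (cmp C p f)"
    using cmp_assoc[of f g b'] cmp_assoc[of f p a'] P f by simp
  also have "\<dots> = zer C (dom C f) (cod C b')"
    using pf cmp_zer_right[of a' "dom C f"] P f by simp
  finally show ?thesis .
qed

lemma kernel_cmp_pushout:
  assumes kf: "is_kernel C f p" and kg: "is_kernel C g q" and fg: "cod C f = dom C g"
    and po: "is_pushout C g p b' a'" and ka': "is_kernel C a' r"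
    and h: "h \<in> Ar C" "dom C h = cod C b'" "cmp C h b' = q"
  shows "is_kernel C (cmp C g f) b'"
proof (rule kernelI)
  note P = pushoutD[OF po] and F = kernelD[OF kf] and G = kernelD[OF kg]
  show "cmp C b' (cmp C g f) = zer C (dom C (cmp C g f)) (cod C b')"
    using pushout_cmp_eq_zer[OF po _ fg] F G fg by simp
  \<comment> \<open>a map killed by \<open>b'\<close> is killed by \<open>q\<close>, so it factors as \<open>g \<circ> s\<close>;
    then \<open>a' \<circ> p \<circ> s = 0\<close> and, \<open>a'\<close> being monic, \<open>p \<circ> s = 0\<close>\<close>
  fix t assume t: "t \<in> Ar C" "cod C t = dom C b'" "cmp C b' t = zer C (dom C t) (cod C b')"
  have hq: "cod C q = cod C h"
    using h P cod_cmp[of b' h] by simp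
  have "cmp C q t = cmp C h (cmp C b' t)"
    using cmp_assoc[of t b' h] t h P by simp
  also have "\<dots> = zer C (dom C t) (cod C q)"
    using t(3) cmp_zer_right[of h "dom C t"] h t P hq by simp
  finally obtain s where s: "s \<in> Ar C" "dom C s = dom C t" "cod C s = dom C g" "cmp C g s = t"
    using kernel_factor[OF kg t(1)] t P G by auto
  have "cmp C a' (cmp C p s) = cmp C b' (cmp C g s)"
    using cmp_assoc[of s p a'] cmp_assoc[of s g b'] s P by simp
  also have "\<dots> = cmp C a' (zer C (dom C t) (cod C p))"
    using s t cmp_zer_right[of a' "dom C t"] P by simp
  finally have "cmp C p s = zer C (dom C s) (cod C p)"
    using kernel_cancel[OF ka', of "cmp C p s" "zer C (dom C t) (cod C p)"] s t P kernelD[OF ka']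
    by simp
  then obtain w where w: "w \<in> Ar C" "dom C w = dom C s" "cod C w = dom C f" "cmp C f w = s"
    using kernel_factor[OF kf s(1)] s P by auto
  then show "\<exists>s. s \<in> Ar C \<and> dom C s = dom C t \<and> cod C s = dom C (cmp C g f) \<and>
      cmp C (cmp C g f) s = t"
    using cmp_assoc[of w f g] s F G fg by (intro exI[of _ w]) auto
next
  note F = kernelD[OF kf] and G = kernelD[OF kg]
  fix x y assume xy: "x \<in> Ar C" "y \<in> Ar C" "cod C x = dom C (cmp C g f)" "cod C y = dom C (cmp C g f)"
    "dom C x = dom C y" "cmp C (cmp C g f) x = cmp C (cmp C g f) y"
  have "cmp C g (cmp C f x) = cmp C g (cmp C f y)"
    using xy cmp_assoc[of x f g] cmp_assoc[of y f g] F G fg by simp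
  then have "cmp C f x = cmp C f y"
    using kernel_cancel[OF kg, of "cmp C f x" "cmp C f y"] xy F G fg by simp
  then show "x = y"
    using kernel_cancel[OF kf xy(1,2)] xy F G fg by simp
qed (use kernelD[OF kf] kernelD[OF kg] pushoutD[OF po] fg in auto)

lemma cokernel_cmp_pushout:
  assumes cp: "is_cokernel C p f" and fg: "cod C f = dom C g" and po: "is_pushout C g p b' a'"
  shows "is_cokernel C b' (cmp C g f)"
proof -
  note P = pushoutD[OF po]
  have f: "f \<in> Ar C" and pf: "cmp C p f = zer C (dom C f) (cod C p)"
    using cokernelD[OF cp] by auto
  show ?thesis
  proof (rule cokernelI)
    show "cmp C b' (cmp C g f) = zer C (dom C (cmp C g f)) (cod C b')"
      using pushout_cmp_eq_zer[OF po f fg pf] f P fg by simp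
  next
    fix t assume t: "t \<in> Ar C" "dom C t = cod C (cmp C g f)"
      "cmp C t (cmp C g f) = zer C (dom C (cmp C g f)) (cod C t)"
    have tg: "cmp C t g \<in> Ar C" "dom C (cmp C t g) = cod C f" "cod C (cmp C t g) = cod C t"
      using t P f fg by auto
    have "cmp C (cmp C t g) f = zer C (dom C f) (cod C (cmp C t g))"
      using cmp_assoc[of f g t] t tg P f fg by simp
    then obtain s where s: "s \<in> Ar C" "dom C s = cod C p" "cod C s = cod C t" "cmp C s p = cmp C t g"
      using cokernel_factor[OF cp tg(1,2)] tg(3) by auto
    show "\<exists>s. s \<in> Ar C \<and> dom C s = cod C b' \<and> cod C s = cod C t \<and> cmp C s b' = t"
      using pushout_factor[OF po t(1) s(1)] t s P f fg by auto
  next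
    fix x y assume xy: "x \<in> Ar C" "y \<in> Ar C" "dom C x = cod C b'" "dom C y = cod C b'"
      "cod C x = cod C y" "cmp C x b' = cmp C y b'"
    \<comment> \<open>\<open>p\<close> is epi, so \<open>x\<close> and \<open>y\<close> also agree on \<open>a'\<close>\<close>
    have "cmp C (cmp C x a') p = cmp C (cmp C y a') p"
      using xy P cmp_assoc[of p a' x] cmp_assoc[of p a' y] cmp_assoc[of g b' x] cmp_assoc[of g b' y]
      by simp
    then have "cmp C x a' = cmp C y a'"
      using cokernel_cancel[OF cp, of "cmp C x a'" "cmp C y a'"] xy P by simp
    then show "x = y"
      using pushout_cancel[OF po xy(1-6)] by simp
  qed (use P f fg in auto)
qed

end

locale conflation_cat =
  fixes C :: "('o, 'm) addcat" and Conf :: "('m \<times> 'm) set"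
  assumes conflation: "conflation_category C Conf"

sublocale conflation_cat \<subseteq> preadditive_category C
  using conflation by unfold_locales (simp add: conflation_category_def is_additive_def)

context conflation_cat
begin

lemma conflation_kernel_cokernel: "(i, p) \<in> Conf \<Longrightarrow> is_kernel C i p \<and> is_cokernel C p i"
  using conflation unfolding conflation_category_def is_kernel_cokernel_pair_def by blast

lemma conflation_iso_closed:
  assumes ip: "(i, p) \<in> Conf" and kc: "is_kernel_cokernel_pair C i' p'"
    and iso: "is_iso C u'" "is_iso C u" "is_iso C u''"
    and "dom C u' = dom C i" "cod C u' = dom C i'" "dom C u = cod C i" "cod C u = cod C i'"
    "dom C u'' = cod C p" "cod C u'' = cod C p'"
    and "cmp C u i = cmp C i' u'" "cmp C u'' p = cmp C p' u"
  shows "(i', p') \<in> Conf"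
proof -
  have "\<forall>(i, p) \<in> Conf. \<forall>i' p' u' u u''.
        is_kernel_cokernel_pair C i' p' \<and> is_iso C u' \<and> is_iso C u \<and> is_iso C u'' \<and>
        dom C u' = dom C i \<and> cod C u' = dom C i' \<and> dom C u = cod C i \<and> cod C u = cod C i' \<and>
        dom C u'' = cod C p \<and> cod C u'' = cod C p' \<and>
        cmp C u i = cmp C i' u' \<and> cmp C u'' p = cmp C p' u \<longrightarrow> (i', p') \<in> Conf"
    using conflation unfolding conflation_category_def by blast
  then show ?thesis
    using ip kc iso assms(6-) by fastforce
qed

lemma conflation_with_cokernel:
  assumes ip: "(i, p) \<in> Conf" and h: "is_cokernel C h i"
  shows "(i, h) \<in> Conf"
proof -
  note kc = conflation_kernel_cokernel[OF ip]
  obtain \<phi> where \<phi>: "is_iso C \<phi>" "dom C \<phi> = cod C p" "cod C \<phi> = cod C h" "cmp C \<phi> p = h"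
    using cokernel_unique_up_to_iso[OF conjunct2[OF kc] h] by blast
  have "is_kernel C i h"
    using kernel_cmp_iso[OF conjunct1[OF kc] \<phi>(1,2)] \<phi>(4) by simp
  then have "is_kernel_cokernel_pair C i h"
    using h by (simp add: is_kernel_cokernel_pair_def)
  moreover have "i \<in> Ar C" "h \<in> Ar C" "dom C h = cod C i"
    using cokernelD[OF h] by auto
  ultimately show ?thesis
    using \<phi> cmp_idm_left[of i] cmp_idm_right[of i] cmp_idm_right[of h] is_iso_idm
    by (intro conflation_iso_closed[OF ip, of i h "idm C (dom C i)" "idm C (cod C i)" \<phi>]) auto
qed

lemma conflation_with_kernel:
  assumes kp: "(k, p) \<in> Conf" and j: "is_kernel C j p" and p: "is_cokernel C p j"
  shows "(j, p) \<in> Conf"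
proof -
  note kc = conflation_kernel_cokernel[OF kp]
  obtain u where u: "is_iso C u" "dom C u = dom C k" "cod C u = dom C j" "cmp C j u = k"
    using kernel_unique_up_to_iso[OF conjunct1[OF kc] j] by blast
  have "is_kernel_cokernel_pair C j p"
    using j p by (simp add: is_kernel_cokernel_pair_def)
  moreover have "k \<in> Ar C" "p \<in> Ar C" "cod C k = dom C p" "cod C j = cod C k"
    using kernelD[OF conjunct1[OF kc]] kernelD[OF j] by auto
  ultimately show ?thesis
    using u cmp_idm_left[of k] cmp_idm_left[of p] cmp_idm_right[of p] is_iso_idm
    by (intro conflation_iso_closed[OF kp, of j p u "idm C (cod C k)" "idm C (cod C p)"]) auto
qed

end

theorem mainTheorem9:
  fixes C :: "('o, 'm) addcat" and Conf :: "('m \<times> 'm) set" and A :: "'o set"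
    and f g :: 'm
  assumes "deflation_exact C Conf"
    and "A \<subseteq> Ob C"
    and "axiom_A1 C Conf A"
    and "axiom_A3 C Conf A"
    and "A_inv_inflation C Conf A f"
    and "A_inv_inflation C Conf A g"
    and "cod C f = dom C g"
  shows "A_inv_inflation C Conf A (cmp C g f)"
proof -
  interpret conflation_cat C Conf
    using assms(1) by unfold_locales (simp add: deflation_exact_def)
  obtain p where fp: "(f, p) \<in> Conf" "cod C p \<in> A"
    using assms(5) by (auto simp: A_inv_inflation_def)
  obtain q where gq: "(g, q) \<in> Conf" "cod C q \<in> A"
    using assms(6) by (auto simp: A_inv_inflation_def)
  note kf = conflation_kernel_cokernel[OF fp(1)] and kg = conflation_kernel_cokernel[OF gq(1)]
  have "dom C g = dom C p"
    using kernelD[OF conjunct1[OF kf]] assms(7) by simp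
  moreover have "inflation Conf g" "deflation Conf p"
    using fp gq by (auto simp: inflation_def deflation_def)
  ultimately obtain b' a' where po: "is_pushout C g p b' a'"
      and "deflation Conf b'" "inflation Conf a'"
    using assms(4) fp(2) unfolding axiom_A3_def by blast
  then obtain k r where kb': "(k, b') \<in> Conf" and a'r: "(a', r) \<in> Conf"
    by (auto simp: inflation_def deflation_def)
  obtain h where h: "is_cokernel C h a'" "cod C h = cod C q" "cmp C h b' = q"
    using cokernel_pushout[OF po] kg by blast
  have "cod C b' \<in> A"
    using assms(3) conflation_with_cokernel[OF a'r h(1)] pushoutD[OF po] fp(2) gq(2) h(2)
    unfolding axiom_A1_def by fastforce
  moreover have "(cmp C g f, b') \<in> Conf"
  proof (rule conflation_with_kernel[OF kb'])
    show "is_kernel C (cmp C g f) b'"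
      using kernel_cmp_pushout[OF conjunct1[OF kf] conjunct1[OF kg] assms(7) po
          conjunct1[OF conflation_kernel_cokernel[OF a'r]] _ _ h(3)]
        cokernelD[OF h(1)] pushoutD[OF po] by simp
    show "is_cokernel C b' (cmp C g f)"
      using cokernel_cmp_pushout[OF conjunct2[OF kf] assms(7) po] .
  qed
  ultimately show ?thesis
    by (auto simp: A_inv_inflation_def)
qed

end
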